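(* Let $f:\{0,1\}^n\to\{0,1\}$ with $f(0^n)=0$, and suppose $f$ has $k$ minimal 1-certificates $c_1,\dots,c_k$ such that for each $i$, the total number of contradictions between $c_i$ and all the other $c_j$ ($j\ne i$) together is at most 2, and such that for each position $p\in[n]$ exactly one of $c_1,\dots,c_k$ assigns the value 1 to $p$. Then $s_0(f)\ge k$.
   Context: A 1-certificate is a partial assignment $c:S\to\{0,1\}$, $S\subseteq[n]$, such that $f(y)=1$ for every $y\in\{0,1\}^n$ agreeing with $c$ on $S$; it is minimal if no restriction of $c$ to a proper subset of $S$ is a 1-certificate. The number of contradictions between two partial assignments is the number of positions where one assigns 1 and the other assigns 0. $s_0(f)=\max\{|\{i: f(x^{\{i\}})\ne f(x)\}| : f(x)=0\}$, where $x^{\{i\}}$ is $x$ with bit $i$ flipped. *)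

theory Defs
  imports Main
begin

(* Inputs of {0,1}^n: functions nat => bool that are False outside {..<n};
   bit value 1 = True, 0 = False. *)
definition cube :: "nat \<Rightarrow> (nat \<Rightarrow> bool) set" where
  "cube n = {x. \<forall>i. n \<le> i \<longrightarrow> \<not> x i}"

definition agrees :: "(nat \<Rightarrow> bool) \<Rightarrow> (nat \<Rightarrow> bool option) \<Rightarrow> bool" where
  "agrees y c \<longleftrightarrow> (\<forall>i b. c i = Some b \<longrightarrow> y i = b)"

definition is_1cert :: "nat \<Rightarrow> ((nat \<Rightarrow> bool) \<Rightarrow> bool) \<Rightarrow> (nat \<Rightarrow> bool option) \<Rightarrow> bool" where
  "is_1cert n f c \<longleftrightarrow> dom c \<subseteq> {..<n} \<and> (\<forall>y\<in>cube n. agrees y c \<longrightarrow> f y)"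

definition is_min_1cert :: "nat \<Rightarrow> ((nat \<Rightarrow> bool) \<Rightarrow> bool) \<Rightarrow> (nat \<Rightarrow> bool option) \<Rightarrow> bool" where
  "is_min_1cert n f c \<longleftrightarrow> is_1cert n f c \<and> (\<forall>S. S \<subset> dom c \<longrightarrow> \<not> is_1cert n f (c |` S))"

definition contradictions :: "(nat \<Rightarrow> bool option) \<Rightarrow> (nat \<Rightarrow> bool option) \<Rightarrow> nat" where
  "contradictions c d = card {i. (c i = Some True \<and> d i = Some False) \<or> (c i = Some False \<and> d i = Some True)}"

definition flip :: "(nat \<Rightarrow> bool) \<Rightarrow> nat \<Rightarrow> (nat \<Rightarrow> bool)" where
  "flip x i = x(i := \<not> x i)"

definition s0 :: "nat \<Rightarrow> ((nat \<Rightarrow> bool) \<Rightarrow> bool) \<Rightarrow> nat" where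
  "s0 n f = Max {card {i\<in>{..<n}. f (flip x i) \<noteq> f x} | x. x \<in> cube n \<and> \<not> f x}"

end

theory Submission
  imports Defs
begin

text \<open>Join two certificates by an edge for every position at which they contradict each other:
  an entry \<open>c h q = Some False\<close> is an edge between \<open>h\<close> and the unique certificate assigning 1 to
  \<open>q\<close>. The hypothesis says this multigraph has maximum degree two, so its edges can be assigned
  injectively to endpoints. Let \<open>P\<close> be the positions whose edge goes to the certificate holding 0
  there, and take a maximal set \<open>T\<close> of positions, avoiding the other contested positions, whose
  indicator is still a 0-input. Then every certificate owns a sensitive bit of this input: a
  1-position of its own missing from \<open>T\<close>, or its unique 0-position in \<open>P\<close>, which lies in \<open>T\<close>.\<close>

section \<open>Injective edge choices in graphs of maximum degree two\<close>

definition incident :: "'e set \<Rightarrow> ('e \<Rightarrow> 'v) \<Rightarrow> ('e \<Rightarrow> 'v) \<Rightarrow> 'v \<Rightarrow> 'e set" where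
  "incident E u w v = {e \<in> E. v = u e \<or> v = w e}"

definition end_choice :: "'e set \<Rightarrow> ('e \<Rightarrow> 'v) \<Rightarrow> ('e \<Rightarrow> 'v) \<Rightarrow> ('e \<Rightarrow> 'v) \<Rightarrow> bool" where
  "end_choice E u w \<phi> \<longleftrightarrow> inj_on \<phi> E \<and> (\<forall>e\<in>E. \<phi> e = u e \<or> \<phi> e = w e)"

lemma card_incident_mono:
  assumes "finite E" "E' \<subseteq> E"
  shows "card (incident E' u w v) \<le> card (incident E u w v)"
  using assms by (intro card_mono) (auto simp: incident_def)

lemma card_incident_Diff_le:
  assumes "finite E" "e \<in> E" "t = u e \<or> t = w e" "card (incident E u w t) \<le> 2"
  shows "card (incident (E - {e}) u w t) \<le> 1"
proof -
  have "incident (E - {e}) u w t = incident E u w t - {e}"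
    unfolding incident_def by auto
  moreover have "e \<in> incident E u w t"
    using assms(2,3) unfolding incident_def by auto
  moreover have "finite (incident E u w t)"
    using assms(1) unfolding incident_def by simp
  ultimately show ?thesis using assms(4) by simp
qed

lemma three_incident_False:
  assumes "finite E" "card (incident E u w v) \<le> 2"
    and "{a, b, d} \<subseteq> incident E u w v" "a \<noteq> b" "a \<noteq> d" "b \<noteq> d"
  shows False
proof -
  have "card {a, b, d} \<le> card (incident E u w v)"
    using assms(1,3) by (intro card_mono) (auto simp: incident_def)
  then show False using assms(2,4-6) by simp
qed

lemma end_choice_update:
  assumes "end_choice (E - {e}) u w \<phi>" "t \<notin> \<phi> ` (E - {e})" "t = u e \<or> t = w e"
  shows "end_choice E u w (\<phi>(e := t))" and "(\<phi>(e := t)) ` E \<subseteq> insert t (\<phi> ` (E - {e}))"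
proof -
  have "inj_on (\<phi>(e := t)) E"
    using assms(1,2) unfolding end_choice_def inj_on_def by (auto simp: fun_upd_apply)
  then show "end_choice E u w (\<phi>(e := t))"
    using assms(1,3) by (auto simp: end_choice_def)
  show "(\<phi>(e := t)) ` E \<subseteq> insert t (\<phi> ` (E - {e}))"
    by auto
qed

lemma end_choice_avoiding:
  assumes "finite E" "\<And>e. e \<in> E \<Longrightarrow> u e \<noteq> w e"
    and "\<And>x. card (incident E u w x) \<le> 2" "card (incident E u w v) \<le> 1"
  shows "\<exists>\<phi>. end_choice E u w \<phi> \<and> v \<notin> \<phi> ` E"
  using assms
proof (induction "card E" arbitrary: E v rule: less_induct)
  case less
  show ?case
  proof (cases "E = {}")
    case True
    then show ?thesis by (simp add: end_choice_def)
  next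
    case False
    obtain e where e: "e \<in> E" and only_e: "incident E u w v \<subseteq> {e}"
    proof (cases "incident E u w v = {}")
      case True
      then show ?thesis using False that by blast
    next
      case nonempty: False
      then obtain e where e: "e \<in> incident E u w v" by blast
      have "finite (incident E u w v)" using less.prems(1) unfolding incident_def by simp
      then have "incident E u w v \<subseteq> {e}"
        using less.prems(4) e by (auto simp: card_le_Suc0_iff_eq)
      moreover have "e \<in> E" using e unfolding incident_def by simp
      ultimately show ?thesis using that by simp
    qed
    define t where "t = (if v = u e then w e else u e)"
    have t_end: "t = u e \<or> t = w e" and t_ne: "t \<noteq> v"
      using less.prems(2)[OF e] unfolding t_def by auto
    have "\<exists>\<phi>. end_choice (E - {e}) u w \<phi> \<and> t \<notin> \<phi> ` (E - {e})"
    proof (rule less.hyps)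
      show "card (E - {e}) < card E"
        using less.prems(1) e by (rule card_Diff1_less)
      show "card (incident (E - {e}) u w x) \<le> 2" for x
        using le_trans[OF card_incident_mono[OF less.prems(1) Diff_subset] less.prems(3)] .
      show "card (incident (E - {e}) u w t) \<le> 1"
        using card_incident_Diff_le[OF less.prems(1) e t_end less.prems(3)] .
    qed (use less.prems(1,2) in auto)
    then obtain \<phi> where \<phi>: "end_choice (E - {e}) u w \<phi>" "t \<notin> \<phi> ` (E - {e})"
      by blast
    have v_notin: "v \<notin> \<phi> ` (E - {e})"
    proof
      assume "v \<in> \<phi> ` (E - {e})"
      then obtain e' where "e' \<in> E - {e}" "v = \<phi> e'" by blast
      then have "e' \<in> incident E u w v"
        using \<phi>(1) unfolding end_choice_def incident_def by auto
      with only_e \<open>e' \<in> E - {e}\<close> show False by blast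
    qed
    have "v \<notin> (\<phi>(e := t)) ` E"
      using end_choice_update(2)[OF \<phi> t_end] v_notin t_ne by auto
    with end_choice_update(1)[OF \<phi> t_end] show ?thesis by blast
  qed
qed

lemma end_choice_exists:
  assumes "finite E" "\<And>e. e \<in> E \<Longrightarrow> u e \<noteq> w e" "\<And>x. card (incident E u w x) \<le> 2"
  shows "\<exists>\<phi>. end_choice E u w \<phi>"
proof (cases "E = {}")
  case True
  then show ?thesis by (simp add: end_choice_def)
next
  case False
  then obtain e where e: "e \<in> E" by blast
  have "card (incident (E - {e}) u w x) \<le> 2" for x
    using le_trans[OF card_incident_mono[OF assms(1) Diff_subset] assms(3)] .
  moreover have "card (incident (E - {e}) u w (u e)) \<le> 1"
    using card_incident_Diff_le[OF assms(1) e _ assms(3)] by simp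
  ultimately obtain \<phi> where "end_choice (E - {e}) u w \<phi>" "u e \<notin> \<phi> ` (E - {e})"
    using end_choice_avoiding[of "E - {e}" u w "u e"] assms(1,2) by blast
  then have "end_choice E u w (\<phi>(e := u e))"
    by (intro end_choice_update(1)) simp_all
  then show ?thesis by auto
qed

definition sensitive_bits :: "nat \<Rightarrow> ((nat \<Rightarrow> bool) \<Rightarrow> bool) \<Rightarrow> (nat \<Rightarrow> bool) \<Rightarrow> nat set" where
  "sensitive_bits n f x = {p \<in> {..<n}. f (flip x p) \<noteq> f x}"

lemma card_sensitive_le_s0:
  assumes "x \<in> cube n" "\<not> f x"
  shows "card (sensitive_bits n f x) \<le> s0 n f"
proof -
  let ?M = "{card {i \<in> {..<n}. f (flip y i) \<noteq> f y} | y. y \<in> cube n \<and> \<not> f y}"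
  have "?M \<subseteq> {..n}"
  proof
    fix z assume "z \<in> ?M"
    then obtain y where z: "z = card {i \<in> {..<n}. f (flip y i) \<noteq> f y}" by blast
    have "card {i \<in> {..<n}. f (flip y i) \<noteq> f y} \<le> card {..<n}"
      by (rule card_mono) auto
    then show "z \<in> {..n}" using z by simp
  qed
  then have "finite ?M" by (rule finite_subset) simp
  moreover have "card (sensitive_bits n f x) \<in> ?M"
    using assms unfolding sensitive_bits_def by blast
  ultimately show ?thesis
    unfolding s0_def by (rule Max_ge)
qed

lemma set_in_cube: "S \<subseteq> {..<n} \<Longrightarrow> (\<lambda>j. j \<in> S) \<in> cube n"
  unfolding cube_def by auto

lemma flip_set_notin: "p \<notin> T \<Longrightarrow> flip (\<lambda>j. j \<in> T) p = (\<lambda>j. j \<in> insert p T)"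
  unfolding flip_def by (auto simp: fun_eq_iff)

lemma flip_set_in: "p \<in> T \<Longrightarrow> flip (\<lambda>j. j \<in> T) p = (\<lambda>j. j \<in> T - {p})"
  unfolding flip_def by (auto simp: fun_eq_iff)

lemma agrees_set_iff: "agrees (\<lambda>j. j \<in> S) d \<longleftrightarrow> (\<forall>q b. d q = Some b \<longrightarrow> (q \<in> S) = b)"
  unfolding agrees_def by simp

locale certificate_cover =
  fixes n :: nat and f :: "(nat \<Rightarrow> bool) \<Rightarrow> bool" and k :: nat
    and c :: "nat \<Rightarrow> nat \<Rightarrow> bool option"
  assumes cert: "\<And>i. i < k \<Longrightarrow> is_1cert n f (c i)"
    and unique_one: "\<And>p. p < n \<Longrightarrow> \<exists>!i. i < k \<and> c i p = Some True"
begin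

lemma dom_subset: "i < k \<Longrightarrow> dom (c i) \<subseteq> {..<n}"
  using cert unfolding is_1cert_def by blast

lemma assigned_lt: "i < k \<Longrightarrow> c i q = Some b \<Longrightarrow> q < n"
  using dom_subset by blast

lemma cert_agrees: "i < k \<Longrightarrow> S \<subseteq> {..<n} \<Longrightarrow> agrees (\<lambda>j. j \<in> S) (c i) \<Longrightarrow> f (\<lambda>j. j \<in> S)"
  using cert set_in_cube unfolding is_1cert_def by blast

lemma one_unique: "i < k \<Longrightarrow> i' < k \<Longrightarrow> c i q = Some True \<Longrightarrow> c i' q = Some True \<Longrightarrow> i = i'"
  using unique_one assigned_lt by metis

definition owner :: "nat \<Rightarrow> nat" where
  "owner q = (THE i. i < k \<and> c i q = Some True)"

lemma owner_eqI: "i < k \<Longrightarrow> c i q = Some True \<Longrightarrow> owner q = i"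
  unfolding owner_def using one_unique by blast

lemma owner: "q < n \<Longrightarrow> owner q < k \<and> c (owner q) q = Some True"
  using unique_one owner_eqI by metis

definition contested :: "nat \<Rightarrow> bool" where
  "contested q \<longleftrightarrow> (\<exists>h<k. c h q = Some False)"

definition zero_entries :: "(nat \<times> nat) set" where
  "zero_entries = {(h, q). h < k \<and> c h q = Some False}"

lemma zero_entries_subset: "zero_entries \<subseteq> {..<k} \<times> {..<n}"
  unfolding zero_entries_def using assigned_lt by auto

lemma owner_zero_entry:
  "(h, q) \<in> zero_entries \<Longrightarrow> owner q < k \<and> c (owner q) q = Some True \<and> owner q \<noteq> h"
  unfolding zero_entries_def using owner assigned_lt by fastforce

abbreviation conflicts :: "nat \<Rightarrow> (nat \<times> nat) set" where
  "conflicts i \<equiv> incident zero_entries fst (owner \<circ> snd) i"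

lemma finite_zero_entries: "finite zero_entries"
  using zero_entries_subset by (rule finite_subset) simp

lemma card_conflicts_le_contradictions:
  assumes i: "i < k"
  shows "card (conflicts i) \<le> (\<Sum>j\<in>{..<k} - {i}. contradictions (c i) (c j))"
proof -
  let ?opp = "\<lambda>j. {q. c i q = Some True \<and> c j q = Some False \<or> c i q = Some False \<and> c j q = Some True}"
  let ?D = "SIGMA j:{..<k} - {i}. ?opp j"
  let ?I = "conflicts i"
  have "?opp j \<subseteq> dom (c i)" for j
    by auto
  then have fin_opp: "finite (?opp j)" for j
    using dom_subset[OF i] by (meson finite_lessThan finite_subset)
  have card_D: "card ?D = (\<Sum>j\<in>{..<k} - {i}. contradictions (c i) (c j))"
    unfolding contradictions_def using fin_opp by (subst card_SigmaI) simp_all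
  \<comment> \<open>\<open>g\<close> sends an edge at \<open>i\<close> to the contradiction between \<open>i\<close> and another certificate it represents.\<close>
  define g where "g e = (if fst e = i then owner (snd e) else fst e, snd e)" for e
  have I_iff: "(h, q) \<in> ?I \<longleftrightarrow> h < k \<and> c h q = Some False \<and> (h = i \<or> owner q = i)" for h q
    unfolding incident_def zero_entries_def by auto
  have "inj_on g ?I"
  proof (rule inj_onI)
    fix a b assume a: "a \<in> ?I" and b: "b \<in> ?I" and gab: "g a = g b"
    obtain h q h' q' where ab: "a = (h, q)" "b = (h', q')" by fastforce
    have "q' = q" using gab ab unfolding g_def by simp
    have "h = h'"
    proof (cases "h = i"; cases "h' = i")
      assume "h = i" "h' \<noteq> i"
      then have "h' = owner q" using gab ab \<open>q' = q\<close> unfolding g_def by simp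
      moreover have "(h', q) \<in> zero_entries" using b ab \<open>q' = q\<close> unfolding incident_def by simp
      ultimately show ?thesis using owner_zero_entry by blast
    next
      assume "h \<noteq> i" "h' = i"
      then have "h = owner q" using gab ab \<open>q' = q\<close> unfolding g_def by simp
      moreover have "(h, q) \<in> zero_entries" using a ab unfolding incident_def by simp
      ultimately show ?thesis using owner_zero_entry by blast
    qed (use gab ab in \<open>simp_all add: g_def\<close>)
    then show "a = b" using ab \<open>q' = q\<close> by simp
  qed
  moreover have "g ` ?I \<subseteq> ?D"
  proof
    fix e assume "e \<in> g ` ?I"
    then obtain h q where hq: "(h, q) \<in> ?I" "e = g (h, q)" by auto
    then have zero: "(h, q) \<in> zero_entries" unfolding incident_def by simp
    from owner_zero_entry[OF zero] hq show "e \<in> ?D"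
      unfolding I_iff g_def by auto
  qed
  moreover have "finite ?D" using fin_opp by simp
  ultimately have "card ?I \<le> card ?D" by (rule card_inj_on_le)
  then show ?thesis using card_D by simp
qed

end

text \<open>Positions in \<open>P\<close> will be set to 1 in the 0-input; the unique certificate holding 0 at such a
  position becomes sensitive there.\<close>

locale flip_plan = certificate_cover +
  fixes P :: "nat set"
  assumes plan_holder_unique: "\<And>q h h'. q \<in> P \<Longrightarrow> h < k \<Longrightarrow> h' < k \<Longrightarrow>
      c h q = Some False \<Longrightarrow> c h' q = Some False \<Longrightarrow> h = h'"
    and plan_zero_unique: "\<And>i q q'. i < k \<Longrightarrow> q \<in> P \<Longrightarrow> q' \<in> P \<Longrightarrow>
      c i q = Some False \<Longrightarrow> c i q' = Some False \<Longrightarrow> q = q'"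
    and plan_contested_ones: "\<And>i q p. i < k \<Longrightarrow> q \<in> P \<Longrightarrow> c i q = Some False \<Longrightarrow>
      c i p = Some True \<Longrightarrow> contested p \<Longrightarrow> p \<in> P"
    and plan_one_outside: "\<And>i p p'. i < k \<Longrightarrow> c i p = Some True \<Longrightarrow> c i p' = Some True \<Longrightarrow>
      contested p \<Longrightarrow> contested p' \<Longrightarrow> p \<notin> P \<Longrightarrow> p' \<notin> P \<Longrightarrow> p = p'"

context certificate_cover
begin

lemma card_conflicts_le_2:
  assumes deg: "\<forall>i<k. (\<Sum>j\<in>{..<k} - {i}. contradictions (c i) (c j)) \<le> 2"
  shows "card (conflicts x) \<le> 2"
proof (cases "x < k")
  case True
  then show ?thesis using card_conflicts_le_contradictions deg le_trans by blast
next
  case False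
  then have "conflicts x = {}"
    unfolding incident_def using owner_zero_entry by (fastforce simp: zero_entries_def)
  then show ?thesis by simp
qed

definition plan_of :: "(nat \<times> nat \<Rightarrow> nat) \<Rightarrow> nat set" where
  "plan_of \<phi> = {q. \<exists>h. (h, q) \<in> zero_entries \<and> \<phi> (h, q) = h \<and> (\<forall>h'. (h', q) \<in> zero_entries \<longrightarrow> h' = h)}"

context
  fixes \<phi> :: "nat \<times> nat \<Rightarrow> nat"
  assumes deg: "\<And>x. card (conflicts x) \<le> 2"
    and choice: "end_choice zero_entries fst (owner \<circ> snd) \<phi>"
begin

lemma no_three_conflicts:
  "{a, b, d} \<subseteq> conflicts x \<Longrightarrow> a \<noteq> b \<Longrightarrow> a \<noteq> d \<Longrightarrow> b \<noteq> d \<Longrightarrow> False"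
  using three_incident_False[OF finite_zero_entries deg] .

lemma choice_eq_iff: "(h, q) \<in> zero_entries \<Longrightarrow> (h', q') \<in> zero_entries \<Longrightarrow>
    \<phi> (h, q) = \<phi> (h', q') \<longleftrightarrow> h = h' \<and> q = q'"
  using choice unfolding end_choice_def inj_on_def by blast

lemma choice_in_plan: "q \<in> plan_of \<phi> \<Longrightarrow> (h, q) \<in> zero_entries \<Longrightarrow> \<phi> (h, q) = h"
  unfolding plan_of_def by blast

lemma choice_outside_plan:
  assumes "q \<notin> plan_of \<phi>" "(h, q) \<in> zero_entries" "\<And>h'. (h', q) \<in> zero_entries \<Longrightarrow> h' = h"
  shows "\<phi> (h, q) = owner q"
proof -
  have "\<phi> (h, q) = h \<or> \<phi> (h, q) = owner q"
    using choice assms(2) unfolding end_choice_def by (metis comp_apply fst_conv snd_conv)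
  moreover have "\<phi> (h, q) \<noteq> h"
    using assms unfolding plan_of_def by blast
  ultimately show ?thesis by simp
qed

lemma plan_of_contested_ones:
  assumes i: "i < k" and q: "q \<in> plan_of \<phi>" "c i q = Some False"
    and p: "c i p = Some True" "contested p"
  shows "p \<in> plan_of \<phi>"
proof -
  obtain h where h: "(h, p) \<in> zero_entries"
    using p(2) unfolding contested_def zero_entries_def by blast
  have iq: "(i, q) \<in> zero_entries" using i q(2) unfolding zero_entries_def by simp
  have "owner p = i" using i p(1) owner_eqI by simp
  then have conflicts_i: "(g, p) \<in> conflicts i" if "(g, p) \<in> zero_entries" for g
    using that unfolding incident_def by simp
  have "(i, q) \<in> conflicts i" using iq unfolding incident_def by simp
  have "h \<noteq> i" "p \<noteq> q" using h p(1) q(2) unfolding zero_entries_def by auto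
  show ?thesis
  proof (cases "\<forall>h'. (h', p) \<in> zero_entries \<longrightarrow> h' = h")
    case True
    show ?thesis
    proof (rule ccontr)
      assume "p \<notin> plan_of \<phi>"
      then have "\<phi> (h, p) = \<phi> (i, q)"
        using choice_outside_plan[OF _ h] True choice_in_plan[OF q(1) iq] \<open>owner p = i\<close> by auto
      then show False using choice_eq_iff[OF h iq] \<open>h \<noteq> i\<close> by simp
    qed
  next
    case False
    then obtain h' where "(h', p) \<in> zero_entries" "h' \<noteq> h" by blast
    then show ?thesis
      using no_three_conflicts[of "(h, p)" "(h', p)" "(i, q)" i] conflicts_i h
        \<open>(i, q) \<in> conflicts i\<close> \<open>p \<noteq> q\<close> by auto
  qed
qed

lemma plan_of_one_outside:
  assumes i: "i < k" and p: "c i p = Some True" "c i p' = Some True" "contested p" "contested p'"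
    and out: "p \<notin> plan_of \<phi>" "p' \<notin> plan_of \<phi>"
  shows "p = p'"
proof (rule ccontr)
  assume "p \<noteq> p'"
  obtain h h' where h: "(h, p) \<in> zero_entries" and h': "(h', p') \<in> zero_entries"
    using p(3,4) unfolding contested_def zero_entries_def by blast
  have "owner p = i" "owner p' = i" using i p(1,2) owner_eqI by auto
  then have conflicts_i: "(g, r) \<in> conflicts i"
    if "(g, r) \<in> zero_entries" "r = p \<or> r = p'" for g r
    using that unfolding incident_def by auto
  have unique: "g = h" if "(g, p) \<in> zero_entries" for g
  proof (rule ccontr)
    assume "g \<noteq> h"
    then show False
      using no_three_conflicts[of "(h, p)" "(g, p)" "(h', p')" i] conflicts_i h h' that \<open>p \<noteq> p'\<close>
      by auto
  qed
  have unique': "g = h'" if "(g, p') \<in> zero_entries" for g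
  proof (rule ccontr)
    assume "g \<noteq> h'"
    then show False
      using no_three_conflicts[of "(h', p')" "(g, p')" "(h, p)" i] conflicts_i h h' that \<open>p \<noteq> p'\<close>
      by auto
  qed
  have "\<phi> (h, p) = \<phi> (h', p')"
    using choice_outside_plan[OF out(1) h unique] choice_outside_plan[OF out(2) h' unique']
      \<open>owner p = i\<close> \<open>owner p' = i\<close> by simp
  then show False using choice_eq_iff[OF h h'] \<open>p \<noteq> p'\<close> by simp
qed

lemma flip_plan_plan_of: "flip_plan n f k c (plan_of \<phi>)"
proof (intro flip_plan.intro flip_plan_axioms.intro certificate_cover_axioms)
  show "h = h'" if "q \<in> plan_of \<phi>" "h < k" "h' < k" "c h q = Some False" "c h' q = Some False"
    for q h h'
    using that unfolding plan_of_def zero_entries_def by blast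
  show "q = q'" if "i < k" "q \<in> plan_of \<phi>" "q' \<in> plan_of \<phi>" "c i q = Some False" "c i q' = Some False"
    for i q q'
  proof -
    have "(i, q) \<in> zero_entries" "(i, q') \<in> zero_entries"
      using that unfolding zero_entries_def by simp_all
    then show ?thesis
      using choice_eq_iff choice_in_plan that(2,3) by metis
  qed
qed (use plan_of_contested_ones plan_of_one_outside in blast)+

end

lemma flip_plan_exists:
  assumes "\<forall>i<k. (\<Sum>j\<in>{..<k} - {i}. contradictions (c i) (c j)) \<le> 2"
  obtains P where "flip_plan n f k c P"
proof -
  have deg: "card (conflicts x) \<le> 2" for x
    using card_conflicts_le_2[OF assms] .
  obtain \<phi> where "end_choice zero_entries fst (owner \<circ> snd) \<phi>"
    using end_choice_exists[OF finite_zero_entries _ deg] owner_zero_entry by fastforce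
  then show ?thesis using flip_plan_plan_of deg that by blast
qed

end

section \<open>A 0-input with a sensitive bit for every certificate\<close>

lemma card_le_card_if_right_unique:
  assumes "finite S" "\<And>i. i \<in> I \<Longrightarrow> \<exists>p\<in>S. R i p"
    and "\<And>i i' p. i \<in> I \<Longrightarrow> i' \<in> I \<Longrightarrow> R i p \<Longrightarrow> R i' p \<Longrightarrow> i = i'"
  shows "card I \<le> card S"
proof -
  obtain g where g: "\<And>i. i \<in> I \<Longrightarrow> g i \<in> S \<and> R i (g i)"
    using assms(2) by metis
  have "inj_on g I"
    using g assms(3) by (metis inj_onI)
  then show ?thesis
    using g assms(1) by (intro card_inj_on_le) auto
qed

context flip_plan
begin

definition kept_zero :: "nat set" where
  "kept_zero = {q. q < n \<and> contested q \<and> q \<notin> P}"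

context
  fixes T :: "nat set"
  assumes T_sub: "T \<subseteq> {..<n} - kept_zero"
    and T_zero: "\<not> f (\<lambda>j. j \<in> T)"
    and T_max: "\<And>p. p \<in> {..<n} - kept_zero \<Longrightarrow> p \<notin> T \<Longrightarrow> f (\<lambda>j. j \<in> insert p T)"
begin

lemma zero_in_T_in_plan: "i < k \<Longrightarrow> c i q = Some False \<Longrightarrow> q \<in> T \<Longrightarrow> q \<in> P"
  using T_sub assigned_lt unfolding kept_zero_def contested_def by blast

lemma agrees_insert_kept_zero:
  assumes i: "i < k" and p: "c i p = Some True" "p \<in> kept_zero"
    and ones: "\<And>q. c i q = Some True \<Longrightarrow> q \<notin> T \<Longrightarrow> q \<in> kept_zero"
  shows "agrees (\<lambda>j. j \<in> insert p T) (c i)"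
  unfolding agrees_set_iff
proof (intro allI impI)
  fix q b assume q: "c i q = Some b"
  show "(q \<in> insert p T) = b"
  proof (cases b)
    case True
    then have cq: "c i q = Some True" using q by simp
    have "q \<in> T" if "q \<noteq> p"
      using plan_one_outside[OF i p(1) cq] ones[OF cq] p(2) that
      unfolding kept_zero_def by blast
    then show ?thesis using True by blast
  next
    case False
    then have cq: "c i q = Some False" using q by simp
    have "q \<notin> T"
      using zero_in_T_in_plan[OF i cq] plan_contested_ones[OF i _ cq p(1)] p(2)
      unfolding kept_zero_def by blast
    moreover have "q \<noteq> p" using p(1) cq by auto
    ultimately show ?thesis using False by simp
  qed
qed

lemma agrees_remove_plan_zero:
  assumes i: "i < k" and ones: "\<And>q. c i q = Some True \<Longrightarrow> q \<in> T"
    and q: "q \<in> T" "c i q = Some False"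
  shows "agrees (\<lambda>j. j \<in> T - {q}) (c i)"
  unfolding agrees_set_iff
proof (intro allI impI)
  fix q' b assume q': "c i q' = Some b"
  show "(q' \<in> T - {q}) = b"
  proof (cases b)
    case True
    then show ?thesis using ones q' q(2) by auto
  next
    case False
    then show ?thesis
      using plan_zero_unique[OF i] zero_in_T_in_plan[OF i] q q' by auto
  qed
qed

definition witness :: "nat \<Rightarrow> nat \<Rightarrow> bool" where
  "witness i p \<longleftrightarrow> (if p \<in> T then p \<in> P \<and> c i p = Some False else c i p = Some True)"

lemma witness_unique: "i < k \<Longrightarrow> i' < k \<Longrightarrow> witness i p \<Longrightarrow> witness i' p \<Longrightarrow> i = i'"
  unfolding witness_def using plan_holder_unique one_unique by (auto split: if_splits)

lemma sensitive_witness: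
  assumes i: "i < k"
  shows "\<exists>p \<in> sensitive_bits n f (\<lambda>j. j \<in> T). witness i p"
proof -
  have T_lt: "T \<subseteq> {..<n}" using T_sub by blast
  have sensitive_one: ?thesis
    if p: "c i p = Some True" "p \<notin> T" and "f (\<lambda>j. j \<in> insert p T)" for p
  proof (rule bexI)
    show "witness i p" using p unfolding witness_def by simp
    show "p \<in> sensitive_bits n f (\<lambda>j. j \<in> T)"
      using that(3) T_zero assigned_lt[OF i p(1)] flip_set_notin[OF p(2)]
      unfolding sensitive_bits_def by simp
  qed
  consider (free) p where "c i p = Some True" "p \<notin> T" "p \<notin> kept_zero"
    | (kept) p where "c i p = Some True" "p \<notin> T" "p \<in> kept_zero"
        "\<And>q. c i q = Some True \<Longrightarrow> q \<notin> T \<Longrightarrow> q \<in> kept_zero"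
    | (inside) "\<And>q. c i q = Some True \<Longrightarrow> q \<in> T"
    by blast
  then show ?thesis
  proof cases
    case (free p)
    then show ?thesis using sensitive_one T_max assigned_lt[OF i] by blast
  next
    case (kept p)
    then have "f (\<lambda>j. j \<in> insert p T)"
      using cert_agrees[OF i] agrees_insert_kept_zero[OF i] T_lt assigned_lt[OF i]
      by (metis insert_subset lessThan_iff)
    then show ?thesis using sensitive_one kept by blast
  next
    case inside
    have "\<not> agrees (\<lambda>j. j \<in> T) (c i)"
      using cert_agrees[OF i T_lt] T_zero by blast
    then obtain q where q: "q \<in> T" "c i q = Some False"
      using inside unfolding agrees_set_iff by (metis (full_types))
    have "T - {q} \<subseteq> {..<n}" using T_lt by blast
    then have "f (\<lambda>j. j \<in> T - {q})"
      using cert_agrees[OF i _ agrees_remove_plan_zero[OF i inside q]] by simp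
    show ?thesis
    proof (rule bexI)
      show "witness i q" using q zero_in_T_in_plan[OF i q(2) q(1)] unfolding witness_def by simp
      show "q \<in> sensitive_bits n f (\<lambda>j. j \<in> T)"
        using \<open>f (\<lambda>j. j \<in> T - {q})\<close> T_zero T_lt q(1) flip_set_in[OF q(1)]
        unfolding sensitive_bits_def by auto
    qed
  qed
qed

lemma k_le_card_sensitive_bits: "k \<le> card (sensitive_bits n f (\<lambda>j. j \<in> T))"
  using card_le_card_if_right_unique[where I = "{..<k}" and R = witness]
    sensitive_witness witness_unique by (simp add: sensitive_bits_def)

end

lemma sensitive_input_exists:
  assumes "\<not> f (\<lambda>_. False)"
  shows "\<exists>x\<in>cube n. \<not> f x \<and> k \<le> card (sensitive_bits n f x)"
proof -
  let ?A = "{..<n} - kept_zero"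
  let ?Z = "{T. T \<subseteq> ?A \<and> \<not> f (\<lambda>j. j \<in> T)}"
  have "finite ?Z" by (rule finite_subset[of _ "Pow ?A"]) auto
  moreover have "?Z \<noteq> {}" using assms by (intro ex_in_conv[THEN iffD1] exI[of _ "{}"]) simp
  ultimately obtain T where T: "T \<in> ?Z" and T_max: "\<forall>T'\<in>?Z. T \<subseteq> T' \<longrightarrow> T = T'"
    by (elim finite_has_maximal[THEN bexE])
  have "k \<le> card (sensitive_bits n f (\<lambda>j. j \<in> T))"
  proof (rule k_le_card_sensitive_bits)
    show "f (\<lambda>j. j \<in> insert p T)" if "p \<in> ?A" "p \<notin> T" for p
    proof -
      have "insert p T \<notin> ?Z" using T_max T that(2) by blast
      then show ?thesis using T that(1) by blast
    qed
  qed (use T in auto)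
  moreover have "(\<lambda>j. j \<in> T) \<in> cube n" using T set_in_cube by blast
  ultimately show ?thesis using T by blast
qed

end

theorem lemma3:
  fixes n k :: nat and f :: "(nat \<Rightarrow> bool) \<Rightarrow> bool"
    and c :: "nat \<Rightarrow> (nat \<Rightarrow> bool option)"
  assumes f0: "\<not> f (\<lambda>_. False)"
    and cert: "\<forall>i<k. is_min_1cert n f (c i)"
    and dist: "inj_on c {..<k}"
    and contr: "\<forall>i<k. (\<Sum>j\<in>{..<k} - {i}. contradictions (c i) (c j)) \<le> 2"
    and ones: "\<forall>p<n. \<exists>!i. i < k \<and> c i p = Some True"
  shows "k \<le> s0 n f"
proof -
  interpret certificate_cover n f k c
    by unfold_locales (use cert ones in \<open>auto simp: is_min_1cert_def\<close>)
  obtain P where "flip_plan n f k c P"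
    using flip_plan_exists contr by blast
  then interpret flip_plan n f k c P .
  obtain x where "x \<in> cube n" "\<not> f x" "k \<le> card (sensitive_bits n f x)"
    using sensitive_input_exists[OF f0] by blast
  then show ?thesis
    using card_sensitive_le_s0 le_trans by blast
qed

end
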